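(* Let $k$ be a commutative ring, $A$ a commutative $k$-algebra, $m\ge1$ an integer or $m=\infty$, and $D\in\operatorname{HS}_k(A;m)$. Then $\binom{r+s}{r}D_{r+s}-D_r\circ D_s\in\operatorname{Diff}^{(r+s-1)}_{A/k}$ whenever $r+s\le m$; consequently the total symbol $\Sigma_m(D)$ is of exponential type in $(\operatorname{gr}\operatorname{Diff}_{A/k})[[t]]/(t^{m+1})$. Moreover $\Sigma_m(a\bullet D)=a\Sigma_m(D)$ for every $a\in A$.
   Context: $\operatorname{HS}_k(A;m)$: sequences $D=(D_0,\dots,D_m)$ of $k$-linear maps $A\to A$ with $D_0=\mathrm{Id}$, $D_i(xy)=\sum_{r+s=i}D_r(x)D_s(y)$. Each $D_i$ is a $k$-linear differential operator of order $\le i$. $\operatorname{Diff}^{(i)}_{A/k}$ denotes $k$-linear differential operators of order $\le i$ (defined inductively: order $0$ = multiplications by elements of $A$; $\varphi$ has order $\le i+1$ iff $[\varphi,a]=\varphi\circ a-a\circ\varphi$ has order $\le i$ for all $a$), $\operatorname{Diff}^{(-1)}=0$, $\sigma_i$ the symbol map to $\operatorname{gr}^i\operatorname{Diff}_{A/k}$. Total symbol: $\Sigma_m(D)=\sum_{i=0}^m\sigma_i(D_i)t^i\in(\operatorname{gr}\operatorname{Diff}_{A/k})[[t]]/(t^{m+1})$. An element $\sum_{i=0}^mR_it^i$ of $B[[t]]/(t^{m+1})$ is of exponential type if $R_0=1$ and $\binom{i+j}{i}R_{i+j}=R_iR_j$ whenever $i+j\le m$. For $a\in A$, $a\bullet D$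 is the Hasse–Schmidt derivation with $(a\bullet D)_0=\mathrm{Id}$ and $(a\bullet D)_r=a^rD_r$; for an exponential type element, $a\cdot\sum R_it^i=\sum a^iR_it^i$. *)

theory Defs
  imports Main "HOL-Library.Extended_Nat"
begin

text \<open>The commutative k-algebra A is given by a ring homomorphism phi from k to A;
  the k-module structure on A is c . x = phi c * x.\<close>

definition klinear :: "('k::comm_ring_1 \<Rightarrow> 'a::comm_ring_1) \<Rightarrow> ('a \<Rightarrow> 'a) \<Rightarrow> bool" where
  "klinear phi f \<longleftrightarrow> (\<forall>x y. f (x + y) = f x + f y) \<and> (\<forall>c x. f (phi c * x) = phi c * f x)"

fun diffop_nat :: "('k::comm_ring_1 \<Rightarrow> 'a::comm_ring_1) \<Rightarrow> nat \<Rightarrow> ('a \<Rightarrow> 'a) set" where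
  "diffop_nat phi 0 = {f. \<exists>b. f = (\<lambda>x. b * x)}"
| "diffop_nat phi (Suc i) =
     {f. klinear phi f \<and> (\<forall>a. (\<lambda>x. f (a * x) - a * f x) \<in> diffop_nat phi i)}"

definition Diff :: "('k::comm_ring_1 \<Rightarrow> 'a::comm_ring_1) \<Rightarrow> int \<Rightarrow> ('a \<Rightarrow> 'a) set" where
  "Diff phi i = (if i < 0 then {\<lambda>x. 0} else diffop_nat phi (nat i))"

definition is_HS :: "('k::comm_ring_1 \<Rightarrow> 'a::comm_ring_1) \<Rightarrow> enat \<Rightarrow> (nat \<Rightarrow> 'a \<Rightarrow> 'a) \<Rightarrow> bool" where
  "is_HS phi m D \<longleftrightarrow> D 0 = id
     \<and> (\<forall>i. enat i \<le> m \<longrightarrow> klinear phi (D i))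
     \<and> (\<forall>i x y. enat i \<le> m \<longrightarrow> D i (x * y) = (\<Sum>r\<le>i. D r x * D (i - r) y))"

text \<open>Elements of gr Diff = (+)_i Diff^(i)/Diff^(i-1) are represented by families P
  with P i in Diff^(i) and finite support; the represented element is
  sum_i sigma_i(P i). Equality in gr Diff is gr_eq.\<close>

definition gr_valid :: "('k::comm_ring_1 \<Rightarrow> 'a::comm_ring_1) \<Rightarrow> (nat \<Rightarrow> 'a \<Rightarrow> 'a) \<Rightarrow> bool" where
  "gr_valid phi P \<longleftrightarrow> (\<forall>i. P i \<in> Diff phi (int i)) \<and> finite {i. P i \<noteq> (\<lambda>x. 0)}"

definition gr_eq :: "('k::comm_ring_1 \<Rightarrow> 'a::comm_ring_1) \<Rightarrow> (nat \<Rightarrow> 'a \<Rightarrow> 'a) \<Rightarrow> (nat \<Rightarrow> 'a \<Rightarrow> 'a) \<Rightarrow> bool" where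
  "gr_eq phi P Q \<longleftrightarrow> gr_valid phi P \<and> gr_valid phi Q
     \<and> (\<forall>i. (\<lambda>x. P i x - Q i x) \<in> Diff phi (int i - 1))"

definition gr_one :: "nat \<Rightarrow> 'a::comm_ring_1 \<Rightarrow> 'a" where
  "gr_one = (\<lambda>i. if i = 0 then id else (\<lambda>x. 0))"

text \<open>Product in gr Diff, induced by composition: sigma_i(P) sigma_j(Q) = sigma_(i+j)(P o Q).\<close>
definition gr_mult :: "(nat \<Rightarrow> 'a::comm_ring_1 \<Rightarrow> 'a) \<Rightarrow> (nat \<Rightarrow> 'a \<Rightarrow> 'a) \<Rightarrow> nat \<Rightarrow> 'a \<Rightarrow> 'a" where
  "gr_mult P Q = (\<lambda>n x. \<Sum>i\<le>n. P i (Q (n - i) x))"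

definition gr_scal :: "nat \<Rightarrow> (nat \<Rightarrow> 'a::comm_ring_1 \<Rightarrow> 'a) \<Rightarrow> nat \<Rightarrow> 'a \<Rightarrow> 'a" where
  "gr_scal c P = (\<lambda>i x. of_nat c * P i x)"

definition sym :: "nat \<Rightarrow> ('a::comm_ring_1 \<Rightarrow> 'a) \<Rightarrow> nat \<Rightarrow> 'a \<Rightarrow> 'a" where
  "sym i P = (\<lambda>j. if j = i then P else (\<lambda>x. 0))"

text \<open>Elements of (gr Diff)[[t]]/(t^(m+1)) are coefficient sequences R (indices i \<le> m).\<close>
definition series_eq :: "('k::comm_ring_1 \<Rightarrow> 'a::comm_ring_1) \<Rightarrow> enat
     \<Rightarrow> (nat \<Rightarrow> nat \<Rightarrow> 'a \<Rightarrow> 'a) \<Rightarrow> (nat \<Rightarrow> nat \<Rightarrow> 'a \<Rightarrow> 'a) \<Rightarrow> bool" where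
  "series_eq phi m R S \<longleftrightarrow> (\<forall>i. enat i \<le> m \<longrightarrow> gr_eq phi (R i) (S i))"

definition total_symbol :: "(nat \<Rightarrow> 'a::comm_ring_1 \<Rightarrow> 'a) \<Rightarrow> nat \<Rightarrow> nat \<Rightarrow> 'a \<Rightarrow> 'a" where
  "total_symbol D = (\<lambda>i. sym i (D i))"

definition exp_type :: "('k::comm_ring_1 \<Rightarrow> 'a::comm_ring_1) \<Rightarrow> enat
     \<Rightarrow> (nat \<Rightarrow> nat \<Rightarrow> 'a \<Rightarrow> 'a) \<Rightarrow> bool" where
  "exp_type phi m R \<longleftrightarrow> (\<forall>i. enat i \<le> m \<longrightarrow> gr_valid phi (R i))
     \<and> gr_eq phi (R 0) gr_one
     \<and> (\<forall>i j. enat (i + j) \<le> m \<longrightarrow>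
          gr_eq phi (gr_scal ((i + j) choose i) (R (i + j))) (gr_mult (R i) (R j)))"

text \<open>a . (sum R_i t^i) = sum a^i R_i t^i, where a^i acts via sigma_0(a^i) in gr Diff.\<close>
definition series_scale :: "'a::comm_ring_1 \<Rightarrow> (nat \<Rightarrow> nat \<Rightarrow> 'a \<Rightarrow> 'a) \<Rightarrow> nat \<Rightarrow> nat \<Rightarrow> 'a \<Rightarrow> 'a" where
  "series_scale a R = (\<lambda>i. gr_mult (sym 0 (\<lambda>x. a ^ i * x)) (R i))"

definition hs_scale :: "'a::comm_ring_1 \<Rightarrow> (nat \<Rightarrow> 'a \<Rightarrow> 'a) \<Rightarrow> nat \<Rightarrow> 'a \<Rightarrow> 'a" where
  "hs_scale a D = (\<lambda>r. if r = 0 then id else (\<lambda>x. a ^ r * D r x))"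

end

theory Submission
  imports Defs
begin

(* Write E(r,s) = C(r+s,r) D_(r+s) - D_r D_s and [f,a](x) = f(ax) - a f(x).
   1. Diff^(p) is closed under sums, left multiplication by ring elements, and
      enlarging p, and Diff^(p) o Diff^(q) is contained in Diff^(p+q); working with
      integer orders (Diff^(p) = 0 for p < 0) makes these laws hold unconditionally.
   2. The Leibniz rule gives [D_n,a] = sum_(l=1..n) D_l(a) D_(n-l); hence D_n has order
      at most n, and the remainder [D_n,a] - D_1(a) D_(n-1) has order at most n-2.
   3. An algebraic identity expresses [E(r,s),a] as D_1(a) (E(r,s-1) + E(r-1,s)) plus
      compositions of order at most r+s-2 (Pascal's rule enters here); by induction on
      r+s, E(r,s) has order at most r+s-1.
   4. In gr Diff, sigma_i(P) sigma_j(Q) = sigma_(i+j)(P o Q), so step 3 is exactly the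
      exponential-type identity for the total symbol, and a^i D_i and sigma_0(a^i) o D_i
      coincide, which gives the compatibility with a . D. *)

lemma klinear_zero: "klinear phi f \<Longrightarrow> f 0 = 0"
  unfolding klinear_def by (metis add_cancel_right_right add_0)

lemma klinear_add: "klinear phi f \<Longrightarrow> f (x + y) = f x + f y"
  unfolding klinear_def by blast

definition commutator :: "('a::comm_ring_1 \<Rightarrow> 'a) \<Rightarrow> 'a \<Rightarrow> 'a \<Rightarrow> 'a" where
  "commutator f a = (\<lambda>x. f (a * x) - a * f x)"

section \<open>Closure properties of differential operators\<close>

lemma diffop_klinear: "f \<in> diffop_nat phi n \<Longrightarrow> klinear phi f"
  by (cases n) (auto simp: klinear_def algebra_simps)

lemma diffop_zero: "(\<lambda>x. 0) \<in> diffop_nat phi n"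
  by (induction n) (auto simp: klinear_def fun_eq_iff intro: exI[of _ 0])

lemma diffop_add:
  "f \<in> diffop_nat phi n \<Longrightarrow> g \<in> diffop_nat phi n \<Longrightarrow> (\<lambda>x. f x + g x) \<in> diffop_nat phi n"
proof (induction n arbitrary: f g)
  case 0
  then obtain b c where "f = (\<lambda>x. b * x)" "g = (\<lambda>x. c * x)" by auto
  then show ?case by (auto intro!: exI[of _ "b + c"] simp: algebra_simps)
next
  case (Suc n)
  have "(\<lambda>x. (f (a * x) - a * f x) + (g (a * x) - a * g x)) \<in> diffop_nat phi n" for a
    using Suc by auto
  then show ?case
    using Suc.prems by (auto simp: klinear_def algebra_simps)
qed

lemma diffop_scal: "f \<in> diffop_nat phi n \<Longrightarrow> (\<lambda>x. b * f x) \<in> diffop_nat phi n"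
proof (induction n arbitrary: f)
  case 0
  then obtain c where "f = (\<lambda>x. c * x)" by auto
  then show ?case by (auto intro!: exI[of _ "b * c"] simp: algebra_simps)
next
  case (Suc n)
  have "(\<lambda>x. b * (f (a * x) - a * f x)) \<in> diffop_nat phi n" for a
    using Suc by auto
  then show ?case
    using Suc.prems by (auto simp: klinear_def algebra_simps)
qed

lemma diffop_mono: "p \<le> q \<Longrightarrow> f \<in> diffop_nat phi p \<Longrightarrow> f \<in> diffop_nat phi q"
proof (induction p arbitrary: q f)
  case 0
  then obtain c where f: "f = (\<lambda>x. c * x)" by auto
  show ?case
  proof (cases q)
    case (Suc q')
    have "(\<lambda>x. f (a * x) - a * f x) = (\<lambda>x. 0)" for a by (simp add: f algebra_simps)
    then show ?thesis using Suc diffop_zero by (simp add: f klinear_def algebra_simps)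
  qed (use 0 in simp)
next
  case (Suc p)
  then obtain q' where q: "q = Suc q'" and "p \<le> q'" by (cases q) auto
  then show ?case
    using Suc.prems(2) Suc.IH[OF \<open>p \<le> q'\<close>] unfolding q diffop_nat.simps by blast
qed

text \<open>Composition adds orders: [f g, a] = f [g, a] + [f, a] g.\<close>
lemma diffop_comp:
  "f \<in> diffop_nat phi p \<Longrightarrow> g \<in> diffop_nat phi q \<Longrightarrow> (\<lambda>x. f (g x)) \<in> diffop_nat phi (p + q)"
proof (induction "p + q" arbitrary: p q f g)
  case 0
  then obtain b c where "f = (\<lambda>x. b * x)" "g = (\<lambda>x. c * x)" by auto
  then show ?case using 0 by (auto intro!: exI[of _ "b * c"] simp: algebra_simps)
next
  case (Suc k)
  have lf: "klinear phi f" and lg: "klinear phi g" using Suc.prems diffop_klinear by auto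
  have inner: "(\<lambda>x. f (g (a * x) - a * g x)) \<in> diffop_nat phi k" for a
  proof (cases q)
    case 0
    then obtain c where "g = (\<lambda>x. c * x)" using Suc.prems by auto
    then show ?thesis using diffop_zero klinear_zero[OF lf] by (simp add: algebra_simps)
  next
    case (Suc q')
    then have "(\<lambda>x. g (a * x) - a * g x) \<in> diffop_nat phi q'" using Suc.prems by auto
    then show ?thesis using Suc.hyps(1)[of p q' f] Suc.prems Suc.hyps(2) \<open>q = Suc q'\<close> by auto
  qed
  have outer: "(\<lambda>x. f (a * g x) - a * f (g x)) \<in> diffop_nat phi k" for a
  proof (cases p)
    case 0
    then obtain c where "f = (\<lambda>x. c * x)" using Suc.prems by auto
    then show ?thesis using diffop_zero by (simp add: algebra_simps)
  next
    case (Suc p')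
    then have "(\<lambda>x. f (a * x) - a * f x) \<in> diffop_nat phi p'" using Suc.prems by auto
    then show ?thesis using Suc.hyps(1)[of p' q _ g] Suc.prems Suc.hyps(2) \<open>p = Suc p'\<close> by auto
  qed
  have "(\<lambda>x. f (g (a * x) - a * g x) + (f (a * g x) - a * f (g x))) \<in> diffop_nat phi k" for a
    using inner outer by (rule diffop_add)
  moreover have "f (g (a * x) - a * g x) + (f (a * g x) - a * f (g x)) = f (g (a * x)) - a * f (g x)"
    for a x
    using klinear_add[OF lf, of "g (a * x) - a * g x" "a * g x"] by simp
  ultimately have "(\<lambda>x. f (g (a * x)) - a * f (g x)) \<in> diffop_nat phi k" for a
    by simp
  moreover have "klinear phi (\<lambda>x. f (g x))" using lf lg by (auto simp: klinear_def)
  ultimately show ?case using Suc.hyps(2)[symmetric] by simp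
qed

lemma Diff_Suc_iff:
  "f \<in> Diff phi (int (Suc n)) \<longleftrightarrow> klinear phi f \<and> (\<forall>a. commutator f a \<in> Diff phi (int n))"
  by (simp add: Diff_def commutator_def del: of_nat_Suc)

lemma Diff_klinear: "0 \<le> p \<Longrightarrow> f \<in> Diff phi p \<Longrightarrow> klinear phi f"
  by (auto simp: Diff_def diffop_klinear)

lemma Diff_zero: "(\<lambda>x. 0) \<in> Diff phi p"
  by (simp add: Diff_def diffop_zero)

lemma Diff_add: "f \<in> Diff phi p \<Longrightarrow> g \<in> Diff phi p \<Longrightarrow> (\<lambda>x. f x + g x) \<in> Diff phi p"
  by (auto simp: Diff_def diffop_add)

lemma Diff_scal: "f \<in> Diff phi p \<Longrightarrow> (\<lambda>x. b * f x) \<in> Diff phi p"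
  by (auto simp: Diff_def diffop_scal)

lemma Diff_diff: "f \<in> Diff phi p \<Longrightarrow> g \<in> Diff phi p \<Longrightarrow> (\<lambda>x. f x - g x) \<in> Diff phi p"
  using Diff_add[of f phi p "\<lambda>x. (- 1) * g x"] Diff_scal[of g phi p "- 1"] by simp

lemma Diff_sum:
  "finite S \<Longrightarrow> (\<And>i. i \<in> S \<Longrightarrow> F i \<in> Diff phi p) \<Longrightarrow> (\<lambda>x. \<Sum>i\<in>S. F i x) \<in> Diff phi p"
proof (induction S rule: finite_induct)
  case empty
  then show ?case using Diff_zero by simp
next
  case (insert i S)
  then have "(\<lambda>x. F i x + (\<Sum>i\<in>S. F i x)) \<in> Diff phi p" by (intro Diff_add) auto
  then show ?case using insert by simp
qed

lemma Diff_mono: "p \<le> q \<Longrightarrow> f \<in> Diff phi p \<Longrightarrow> f \<in> Diff phi q"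
proof (cases "p < 0")
  case False
  assume "p \<le> q" "f \<in> Diff phi p"
  then show ?thesis using False diffop_mono[of "nat p" "nat q" f phi] by (simp add: Diff_def)
qed (auto simp: Diff_def diffop_zero)

lemma Diff_comp: "f \<in> Diff phi p \<Longrightarrow> g \<in> Diff phi q \<Longrightarrow> (\<lambda>x. f (g x)) \<in> Diff phi (p + q)"
proof (cases "p < 0 \<or> q < 0")
  case True
  assume f: "f \<in> Diff phi p" and g: "g \<in> Diff phi q"
  have "(\<lambda>x. f (g x)) = (\<lambda>x. 0)"
  proof (cases "p < 0")
    case False
    then have "g = (\<lambda>x. 0)" using True g by (simp add: Diff_def)
    then show ?thesis using klinear_zero[OF Diff_klinear[OF _ f]] False by simp
  qed (use f in \<open>simp add: Diff_def\<close>)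
  then show ?thesis by (simp add: Diff_zero)
next
  case False
  assume "f \<in> Diff phi p" "g \<in> Diff phi q"
  then show ?thesis
    using False diffop_comp[of f phi "nat p" g "nat q"] by (simp add: Diff_def nat_add_distrib)
qed

lemma Diff_tail_sum:
  assumes ord: "\<And>i. i \<le> n - j \<Longrightarrow> D i \<in> Diff phi (int i)"
  shows "(\<lambda>x. \<Sum>l\<in>{j..n}. c l * D (n - l) x) \<in> Diff phi (int n - int j)"
proof (rule Diff_sum)
  fix l assume l: "l \<in> {j..n}"
  then have "D (n - l) \<in> Diff phi (int (n - l))" by (intro ord) auto
  then show "(\<lambda>x. c l * D (n - l) x) \<in> Diff phi (int n - int j)"
    by (rule Diff_mono[rotated, OF Diff_scal]) (use l in auto)
qed simp

section \<open>Symbols in the associated graded algebra\<close>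

lemma gr_mult_sym:
  assumes "P 0 = 0"
  shows "gr_mult (sym i P) (sym j Q) = sym (i + j) (\<lambda>x. P (Q x))"
proof (intro ext)
  fix n x
  have "gr_mult (sym i P) (sym j Q) n x = (\<Sum>l\<le>n. if l = i then P (sym j Q (n - l) x) else 0)"
    unfolding gr_mult_def sym_def by (intro sum.cong) auto
  also have "\<dots> = (if i \<le> n then P (sym j Q (n - i) x) else 0)"
    by (simp add: sum.delta')
  also have "\<dots> = sym (i + j) (\<lambda>x. P (Q x)) n x"
    using assms by (auto simp: sym_def)
  finally show "gr_mult (sym i P) (sym j Q) n x = sym (i + j) (\<lambda>x. P (Q x)) n x" .
qed

lemma sym_valid: "P \<in> Diff phi (int i) \<Longrightarrow> gr_valid phi (sym i P)"
  unfolding gr_valid_def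
  by (auto simp: sym_def Diff_zero intro: finite_subset[of _ "{i}"])

lemma gr_eq_sym:
  assumes "P \<in> Diff phi (int n)" "Q \<in> Diff phi (int n)" "(\<lambda>x. P x - Q x) \<in> Diff phi (int n - 1)"
  shows "gr_eq phi (sym n P) (sym n Q)"
  using assms sym_valid[of P phi n] sym_valid[of Q phi n]
  unfolding gr_eq_def by (auto simp: sym_def Diff_zero)

section \<open>Hasse-Schmidt derivations\<close>

definition hs_remainder :: "(nat \<Rightarrow> 'a::comm_ring_1 \<Rightarrow> 'a) \<Rightarrow> nat \<Rightarrow> 'a \<Rightarrow> 'a \<Rightarrow> 'a" where
  "hs_remainder D n a = (\<lambda>x. commutator (D n) a x - D 1 a * D (n - 1) x)"

definition hs_defect :: "(nat \<Rightarrow> 'a::comm_ring_1 \<Rightarrow> 'a) \<Rightarrow> nat \<Rightarrow> nat \<Rightarrow> 'a \<Rightarrow> 'a" where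
  "hs_defect D r s = (\<lambda>x. of_nat ((r + s) choose r) * D (r + s) x - D r (D s x))"

text \<open>The commutator of a defect with a multiplication: its leading part is D_1(a) times
  two defects of total index one less (by Pascal's rule); the rest are compositions
  involving remainders or a commutator with D_1(a).\<close>
lemma commutator_hs_defect:
  assumes lin: "klinear phi (D (Suc r))"
  shows "commutator (hs_defect D (Suc r) (Suc s)) a x =
      D 1 a * (hs_defect D (Suc r) s x + hs_defect D r (Suc s) x)
    + of_nat ((Suc r + Suc s) choose Suc r) * hs_remainder D (Suc r + Suc s) a x
    - D (Suc r) (hs_remainder D (Suc s) a x)
    - hs_remainder D (Suc r) a (D (Suc s) x)
    - commutator (D (Suc r)) (D 1 a) (D s x)"
proof -
  define R where "R = D (Suc r)"
  have expand: "D n (b * y) = b * D n y + D 1 b * D (n - 1) y + hs_remainder D n b y" for n b y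
    by (simp add: hs_remainder_def commutator_def)
  have mult: "R (b * y) = b * R y + commutator R b y" for b y
    by (simp add: commutator_def)
  have "R (D (Suc s) (a * x))
      = R (a * D (Suc s) x) + R (D 1 a * D s x) + R (hs_remainder D (Suc s) a x)"
    using expand[of "Suc s" a x] klinear_add[OF lin] by (simp add: R_def)
  also have "\<dots> = a * R (D (Suc s) x) + D 1 a * D r (D (Suc s) x)
      + hs_remainder D (Suc r) a (D (Suc s) x)
      + (D 1 a * R (D s x) + commutator R (D 1 a) (D s x)) + R (hs_remainder D (Suc s) a x)"
    using expand[of "Suc r" a "D (Suc s) x"] mult[of "D 1 a" "D s x"] by (simp add: R_def)
  finally have composite: "R (D (Suc s) (a * x)) = \<dots>" .
  have pascal: "(Suc r + Suc s) choose Suc r = ((Suc r + s) choose Suc r) + ((r + Suc s) choose r)"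
    by simp
  show ?thesis
    using composite expand[of "Suc r + Suc s" a x]
    unfolding hs_defect_def commutator_def R_def pascal of_nat_add
    by (simp add: algebra_simps)
qed

context
  fixes phi :: "'k::comm_ring_1 \<Rightarrow> 'a::comm_ring_1" and m :: enat and D :: "nat \<Rightarrow> 'a \<Rightarrow> 'a"
  assumes HS: "is_HS phi m D"
begin

lemma hs_id: "D 0 = id"
  using HS by (simp add: is_HS_def)

lemma hs_klinear: "enat i \<le> m \<Longrightarrow> klinear phi (D i)"
  using HS by (simp add: is_HS_def)

lemma hs_below: "j \<le> i \<Longrightarrow> enat i \<le> m \<Longrightarrow> enat j \<le> m"
  by (meson enat_ord_simps(1) order_trans)

text \<open>The Leibniz rule, rewritten as a formula for the commutator [D_n, a].\<close>
lemma hs_commutator: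
  assumes "enat n \<le> m"
  shows "commutator (D n) a x = (\<Sum>l\<in>{1..n}. D l a * D (n - l) x)"
proof -
  have "D n (a * x) = (\<Sum>l\<in>{0..n}. D l a * D (n - l) x)"
    using HS assms by (simp add: is_HS_def atMost_atLeast0)
  also have "\<dots> = a * D n x + (\<Sum>l\<in>{1..n}. D l a * D (n - l) x)"
    by (simp add: sum.atLeast_Suc_atMost hs_id)
  finally show ?thesis by (simp add: commutator_def)
qed

lemma hs_order: "enat i \<le> m \<Longrightarrow> D i \<in> Diff phi (int i)"
proof (induction i rule: less_induct)
  case (less i)
  show ?case
  proof (cases i)
    case 0
    then show ?thesis by (auto simp: Diff_def hs_id fun_eq_iff intro: exI[of _ 1])
  next
    case (Suc k)
    have "(\<lambda>x. \<Sum>l\<in>{1..i}. D l a * D (i - l) x) \<in> Diff phi (int i - int 1)" for a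
      using Suc by (intro Diff_tail_sum less.IH hs_below[OF _ less.prems]) auto
    moreover have "commutator (D i) a = (\<lambda>x. \<Sum>l\<in>{1..i}. D l a * D (i - l) x)" for a
      using hs_commutator[OF less.prems] by (simp add: fun_eq_iff)
    ultimately have "commutator (D i) a \<in> Diff phi (int k)" for a
      using Suc by simp
    then show ?thesis
      using Suc hs_klinear[OF less.prems] Diff_Suc_iff by blast
  qed
qed

lemma hs_remainder_order:
  assumes n: "enat n \<le> m" "1 \<le> n"
  shows "hs_remainder D n a \<in> Diff phi (int n - 2)"
proof -
  have "(\<lambda>x. \<Sum>l\<in>{2..n}. D l a * D (n - l) x) \<in> Diff phi (int n - int 2)"
    by (intro Diff_tail_sum hs_order hs_below[OF _ n(1)]) auto
  moreover have "hs_remainder D n a = (\<lambda>x. \<Sum>l\<in>{2..n}. D l a * D (n - l) x)"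
    using hs_commutator[OF n(1)] n(2)
    by (simp add: fun_eq_iff hs_remainder_def sum.atLeast_Suc_atMost numeral_2_eq_2)
  ultimately show ?thesis by simp
qed

text \<open>The defect E(r,s) has order at most r + s - 1, by induction on r + s: its
  commutators have order at most r + s - 2 by the identity commutator_hs_defect.\<close>
lemma hs_defect_order: "enat (r + s) \<le> m \<Longrightarrow> hs_defect D r s \<in> Diff phi (int (r + s) - 1)"
proof (induction "r + s" arbitrary: r s rule: less_induct)
  case less
  show ?case
  proof (cases "r = 0 \<or> s = 0")
    case True
    then have "hs_defect D r s = (\<lambda>x. 0)" by (auto simp: hs_defect_def hs_id)
    then show ?thesis by (simp add: Diff_zero)
  next
    case False
    then obtain r' s' where rs: "r = Suc r'" "s = Suc s'" by (meson not0_implies_Suc)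
    have le: "j \<le> r + s \<Longrightarrow> enat j \<le> m" for j using hs_below less.prems by blast
    have ord: "j \<le> r + s \<Longrightarrow> D j \<in> Diff phi (int j)" for j using hs_order le by blast
    have rem: "1 \<le> j \<Longrightarrow> j \<le> r + s \<Longrightarrow> hs_remainder D j b \<in> Diff phi (int j - 2)" for j b
      using hs_remainder_order le by blast
    have lower1: "hs_defect D r s' \<in> Diff phi (int (r' + s'))"
      using less.hyps[of r s'] le[of "r + s'"] rs by simp
    have lower2: "hs_defect D r' s \<in> Diff phi (int (r' + s'))"
      using less.hyps[of r' s] le[of "r' + s"] rs by simp
    have commutator_order: "commutator (hs_defect D r s) a \<in> Diff phi (int (r' + s'))" for a
    proof -
      have leading: "(\<lambda>x. D 1 a * (hs_defect D r s' x + hs_defect D r' s x)) \<in> Diff phi (int (r' + s'))"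
        by (intro Diff_scal Diff_add lower1 lower2)
      have rem_full: "(\<lambda>x. of_nat ((r + s) choose r) * hs_remainder D (r + s) a x)
          \<in> Diff phi (int (r' + s'))"
        using Diff_scal[OF rem[of "r + s" a]] rs by simp
      have rem_inner: "(\<lambda>x. D r (hs_remainder D s a x)) \<in> Diff phi (int (r' + s'))"
        by (rule Diff_mono[OF _ Diff_comp[OF ord rem]]) (use rs in auto)
      have rem_outer: "(\<lambda>x. hs_remainder D r a (D s x)) \<in> Diff phi (int (r' + s'))"
        by (rule Diff_mono[OF _ Diff_comp[OF rem ord]]) (use rs in auto)
      have "commutator (D r) (D 1 a) \<in> Diff phi (int r')"
        using ord[of r] rs Diff_Suc_iff by auto
      then have cross: "(\<lambda>x. commutator (D r) (D 1 a) (D s' x)) \<in> Diff phi (int (r' + s'))"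
        using Diff_comp[OF _ ord[of s']] rs by simp
      have "commutator (hs_defect D r s) a = (\<lambda>x.
            D 1 a * (hs_defect D r s' x + hs_defect D r' s x)
          + of_nat ((r + s) choose r) * hs_remainder D (r + s) a x
          - D r (hs_remainder D s a x) - hs_remainder D r a (D s x)
          - commutator (D r) (D 1 a) (D s' x))"
        using commutator_hs_defect[OF hs_klinear[OF le]] rs by (simp add: fun_eq_iff)
      then show ?thesis
        by (simp only:) (intro Diff_diff Diff_add leading rem_full rem_inner rem_outer cross)
    qed
    have "hs_defect D r s \<in> Diff phi (int (r + s))"
      unfolding hs_defect_def
      by (intro Diff_diff Diff_scal ord) (use Diff_comp[OF ord ord] in auto)
    then have "klinear phi (hs_defect D r s)" by (rule Diff_klinear[rotated]) simp
    then have "hs_defect D r s \<in> Diff phi (int (Suc (r' + s')))"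
      using commutator_order Diff_Suc_iff by blast
    then show ?thesis using rs by simp
  qed
qed

text \<open>The exponential law for the total symbol is the symbol-level form of
  hs_defect_order.\<close>
lemma total_symbol_exp_type: "exp_type phi m (total_symbol D)"
  unfolding exp_type_def
proof (intro conjI allI impI)
  fix i assume "enat i \<le> m"
  then show "gr_valid phi (total_symbol D i)" by (simp add: total_symbol_def sym_valid hs_order)
next
  have id: "id \<in> Diff phi (int 0)" by (auto simp: Diff_def fun_eq_iff intro: exI[of _ 1])
  have "gr_eq phi (sym 0 id) (sym 0 (id :: 'a \<Rightarrow> 'a))"
    by (rule gr_eq_sym[OF id id]) (simp add: Diff_zero)
  moreover have "gr_one = sym 0 (id :: 'a \<Rightarrow> 'a)" by (auto simp: gr_one_def sym_def)
  ultimately show "gr_eq phi (total_symbol D 0) gr_one"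
    by (simp add: total_symbol_def hs_id)
next
  fix i j assume ij: "enat (i + j) \<le> m"
  have i: "enat i \<le> m" and j: "enat j \<le> m" using hs_below[OF _ ij] by auto
  have scaled: "gr_scal ((i + j) choose i) (total_symbol D (i + j))
      = sym (i + j) (\<lambda>x. of_nat ((i + j) choose i) * D (i + j) x)"
    by (auto simp: gr_scal_def total_symbol_def sym_def)
  have product: "gr_mult (total_symbol D i) (total_symbol D j) = sym (i + j) (\<lambda>x. D i (D j x))"
    unfolding total_symbol_def using klinear_zero[OF hs_klinear[OF i]] by (rule gr_mult_sym)
  show "gr_eq phi (gr_scal ((i + j) choose i) (total_symbol D (i + j)))
      (gr_mult (total_symbol D i) (total_symbol D j))"
    unfolding scaled product
    using hs_defect_order[OF ij] Diff_comp[OF hs_order[OF i] hs_order[OF j]]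
    by (intro gr_eq_sym Diff_scal hs_order ij) (auto simp: hs_defect_def)
qed

lemma total_symbol_hs_scale:
  "series_eq phi m (total_symbol (hs_scale a D)) (series_scale a (total_symbol D))"
  unfolding series_eq_def
proof (intro allI impI)
  fix i assume i: "enat i \<le> m"
  have "total_symbol (hs_scale a D) i = sym i (\<lambda>x. a ^ i * D i x)"
    by (auto simp: total_symbol_def hs_scale_def hs_id id_def)
  moreover have "series_scale a (total_symbol D) i = sym i (\<lambda>x. a ^ i * D i x)"
    unfolding series_scale_def total_symbol_def using gr_mult_sym[of "\<lambda>x. a ^ i * x" 0 i "D i"]
    by simp
  moreover have "(\<lambda>x. a ^ i * D i x) \<in> Diff phi (int i)" by (intro Diff_scal hs_order i)
  ultimately show "gr_eq phi (total_symbol (hs_scale a D) i) (series_scale a (total_symbol D) i)"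
    by (auto intro: gr_eq_sym simp: Diff_zero)
qed

end

theorem mainTheorem7:
  fixes phi :: "'k::comm_ring_1 \<Rightarrow> 'a::comm_ring_1"
    and m :: enat and D :: "nat \<Rightarrow> 'a \<Rightarrow> 'a"
  assumes hom_one: "phi 1 = 1"
    and hom_add: "\<And>x y. phi (x + y) = phi x + phi y"
    and hom_mult: "\<And>x y. phi (x * y) = phi x * phi y"
    and m_ge: "m \<ge> 1"
    and HS: "is_HS phi m D"
  shows "(\<forall>r s. enat (r + s) \<le> m \<longrightarrow>
            (\<lambda>x. of_nat ((r + s) choose r) * D (r + s) x - D r (D s x)) \<in> Diff phi (int (r + s) - 1))
       \<and> exp_type phi m (total_symbol D)
       \<and> (\<forall>a. series_eq phi m (total_symbol (hs_scale a D)) (series_scale a (total_symbol D)))"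
  using hs_defect_order[OF HS] total_symbol_exp_type[OF HS] total_symbol_hs_scale[OF HS]
  by (auto simp: hs_defect_def)

end
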